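(* Let $k\ge4$ be an integer and $\eta\in[\eta_{k+1},\eta_k)$. Then $0,1\in\mathrm{co}(V_k)$, where $V_k=\{b_0,z_0,z_1,\dots,z_k,w_1,\dots,w_k\}$.
   Context: For $\eta\in(0,\pi/3)$ let $a=\frac{e^{-i\eta}}{2\cos\eta}$, $c=\frac{1}{1-|a|^4}$, and for integers $j\ge0$ put $z_j=ca^{j+1}$, $w_j=1-c|a|^2a^j$, $b_0=a+c|a|^4$. For integers $k\ge1$ let $\Phi_k(\eta)=(1-|a|^4)\sin((k-1)\eta)-|a|^3\sin((k-2)\eta)+|a|^k\sin\eta$; for each $k\ge4$, $\Phi_k$ has a unique zero in $(\pi/k,\pi/(k-1))$, denoted $\eta_k$. $\mathrm{co}$ denotes convex hull. *)

theory Defs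
  imports "HOL-Analysis.Analysis"
begin

definition aa :: "real \<Rightarrow> complex" where
  "aa \<eta> = exp (- \<i> * complex_of_real \<eta>) / complex_of_real (2 * cos \<eta>)"

definition cc :: "real \<Rightarrow> real" where
  "cc \<eta> = 1 / (1 - cmod (aa \<eta>) ^ 4)"

definition zz :: "real \<Rightarrow> nat \<Rightarrow> complex" where
  "zz \<eta> j = complex_of_real (cc \<eta>) * aa \<eta> ^ (j + 1)"

definition ww :: "real \<Rightarrow> nat \<Rightarrow> complex" where
  "ww \<eta> j = 1 - complex_of_real (cc \<eta> * cmod (aa \<eta>) ^ 2) * aa \<eta> ^ j"

definition b0 :: "real \<Rightarrow> complex" where
  "b0 \<eta> = aa \<eta> + complex_of_real (cc \<eta> * cmod (aa \<eta>) ^ 4)"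

definition Phi :: "nat \<Rightarrow> real \<Rightarrow> real" where
  "Phi k \<eta> = (1 - cmod (aa \<eta>) ^ 4) * sin ((real k - 1) * \<eta>)
             - cmod (aa \<eta>) ^ 3 * sin ((real k - 2) * \<eta>)
             + cmod (aa \<eta>) ^ k * sin \<eta>"

definition eta :: "nat \<Rightarrow> real" where
  "eta k = (THE \<eta>. \<eta> \<in> {pi / real k <..< pi / (real k - 1)} \<and> Phi k \<eta> = 0)"

definition Vk :: "real \<Rightarrow> nat \<Rightarrow> complex set" where
  "Vk \<eta> k = {b0 \<eta>} \<union> zz \<eta> ` {0..k} \<union> ww \<eta> ` {1..k}"

end

theory Submission
  imports Defs
begin

text \<open>
  Put \<open>r = |a| = 1 / (2 cos \<eta>)\<close>, so that \<open>a^j = r^j e^{-ij\<eta>}\<close>. If \<open>\<pi> < (k + 1) \<eta>\<close>,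
  there is an \<open>m \<le> k\<close> with \<open>m \<eta> < \<pi> \<le> (m + 1) \<eta>\<close>: the points \<open>z_{m-1}, z_m\<close> lie on
  opposite sides of the real axis and the segment joining them meets it at some \<open>v < 0\<close>;
  likewise \<open>b_0\<close> and \<open>w_m\<close> lie on opposite sides and their segment meets it at some
  \<open>X > 1\<close>. Hence \<open>[v, X] \<supseteq> [0, 1]\<close> lies in the convex hull. The hypothesis
  \<open>\<eta> \<ge> \<eta>_{k+1}\<close> gives \<open>\<pi> < (k + 1) \<eta>\<close> once \<open>\<eta>_n\<close> is known to lie in
  \<open>(\<pi>/n, \<pi>/(n-1))\<close>; for \<open>n \<ge> 5\<close> this follows because \<open>\<Phi>_n\<close> changes sign on that
  interval and is strictly decreasing there, so that the zero picked by \<open>THE\<close> exists and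
  is unique.
\<close>

definition rho :: "real \<Rightarrow> real" where
  "rho x = 1 / (2 * cos x)"

lemma rho_pos: "cos x > 0 \<Longrightarrow> rho x > 0"
  by (simp add: rho_def)

lemma rho_mult_cos: "cos x > 0 \<Longrightarrow> rho x * cos x = 1 / 2"
  by (simp add: rho_def)

lemma rho_less_one:
  assumes "0 \<le> x" "x < pi / 3"
  shows "rho x < 1"
proof -
  have "cos x > 1 / 2"
    using cos_monotone_0_pi[of x "pi / 3"] assms cos_60 pi_gt_zero by simp
  then show ?thesis by (simp add: rho_def)
qed

lemma rho_squared_le:
  assumes "0 \<le> x" "x \<le> pi / 4"
  shows "rho x ^ 2 \<le> 1 / 2"
proof -
  have "sqrt 2 / 2 \<le> cos x"
    using cos_monotone_0_pi_le[of x "pi / 4"] assms cos_45 by simp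
  then have "(sqrt 2 / 2) ^ 2 \<le> cos x ^ 2"
    by (intro power_mono) auto
  then have "1 / (4 * cos x ^ 2) \<le> 1 / (4 * (1 / 2))"
    by (intro divide_left_mono) (auto simp: power_divide)
  then show ?thesis
    by (simp add: rho_def power_divide power_mult_distrib)
qed

lemma cmod_aa: "cos x > 0 \<Longrightarrow> cmod (aa x) = rho x"
  by (simp add: aa_def rho_def norm_divide norm_mult)

lemma cc_eq: "cos x > 0 \<Longrightarrow> cc x = 1 / (1 - rho x ^ 4)"
  by (simp add: cc_def cmod_aa)

lemma cc_pos:
  assumes "0 \<le> x" "x < pi / 3"
  shows "0 < cc x"
proof -
  have "0 < cos x" using assms by (intro cos_gt_zero_pi) auto
  moreover have "rho x ^ 4 < 1"
    using rho_pos[OF \<open>0 < cos x\<close>] rho_less_one[OF assms] by (simp add: power_less_one_iff)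
  ultimately show ?thesis by (simp add: cc_eq)
qed

lemma aa_power:
  assumes "cos x > 0"
  shows "aa x ^ j = of_real (rho x ^ j) * cis (- (real j * x))"
proof -
  have "aa x = of_real (rho x) * cis (- x)"
    using assms by (simp add: aa_def rho_def cis_conv_exp field_simps)
  moreover have "cis (- x) ^ j = cis (- (real j * x))"
    by (simp only: Complex.DeMoivre mult_minus_right)
  ultimately show ?thesis
    by (simp add: power_mult_distrib)
qed

lemma Re_aa_power: "cos x > 0 \<Longrightarrow> Re (aa x ^ j) = rho x ^ j * cos (real j * x)"
  by (simp add: aa_power)

lemma Im_aa_power: "cos x > 0 \<Longrightarrow> Im (aa x ^ j) = - (rho x ^ j * sin (real j * x))"
  by (simp add: aa_power)

lemma Re_zz: "cos x > 0 \<Longrightarrow> Re (zz x j) = cc x * rho x ^ (j + 1) * cos (real (j + 1) * x)"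
  unfolding zz_def by (subst aa_power) (simp_all del: of_nat_Suc power_Suc)

lemma Im_zz: "cos x > 0 \<Longrightarrow> Im (zz x j) = - cc x * rho x ^ (j + 1) * sin (real (j + 1) * x)"
  unfolding zz_def by (subst aa_power) (simp_all del: of_nat_Suc power_Suc)

lemma Re_ww: "cos x > 0 \<Longrightarrow> Re (ww x j) = 1 - cc x * rho x ^ (j + 2) * cos (real j * x)"
  by (simp add: ww_def Re_aa_power Im_aa_power cmod_aa power_add power2_eq_square)

lemma Im_ww: "cos x > 0 \<Longrightarrow> Im (ww x j) = cc x * rho x ^ (j + 2) * sin (real j * x)"
  by (simp add: ww_def Re_aa_power Im_aa_power cmod_aa power_add power2_eq_square)

lemma Re_b0: "cos x > 0 \<Longrightarrow> Re (b0 x) = 1 / 2 + cc x * rho x ^ 4"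
  using Re_aa_power[of x 1] by (simp add: b0_def cmod_aa rho_mult_cos)

lemma Im_b0: "cos x > 0 \<Longrightarrow> Im (b0 x) = - rho x * sin x"
  using Im_aa_power[of x 1] by (simp add: b0_def)

definition phi :: "nat \<Rightarrow> real \<Rightarrow> real" where
  "phi n x = (1 - rho x ^ 4) * sin ((real n - 1) * x) - rho x ^ 3 * sin ((real n - 2) * x)
             + rho x ^ n * sin x"

definition phi_deriv :: "nat \<Rightarrow> real \<Rightarrow> real" where
  "phi_deriv n x =
     - 8 * rho x ^ 5 * sin x * sin ((real n - 1) * x)
     + (real n - 1) * (1 - rho x ^ 4) * cos ((real n - 1) * x)
     - 6 * rho x ^ 4 * sin x * sin ((real n - 2) * x)
     - (real n - 2) * rho x ^ 3 * cos ((real n - 2) * x)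
     + 2 * real n * rho x ^ (n + 1) * sin x ^ 2
     + rho x ^ n * cos x"

lemma Phi_eq_phi: "cos x > 0 \<Longrightarrow> Phi n x = phi n x"
  by (simp add: Phi_def phi_def cmod_aa)

lemma rho_has_real_derivative:
  "cos x \<noteq> 0 \<Longrightarrow> (rho has_real_derivative 2 * rho x ^ 2 * sin x) (at x)"
  unfolding rho_def by (auto intro!: derivative_eq_intros simp: field_simps power2_eq_square)

lemma phi_has_real_derivative:
  assumes "cos x \<noteq> 0"
  shows "(phi n has_real_derivative phi_deriv n x) (at x)"
proof -
  note rho' = rho_has_real_derivative[OF assms]
  show ?thesis
    unfolding phi_def[abs_def]
    apply (rule derivative_eq_intros DERIV_power[OF rho'] rho' | rule refl)+
    by (cases n) (simp_all add: phi_deriv_def algebra_simps eval_nat_numeral)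
qed

lemma root_interval_bounds:
  assumes "n \<ge> 5" "pi / real n \<le> x" "x \<le> pi / (real n - 1)"
  shows "0 < x" "x \<le> pi / 4"
proof -
  have n: "real n \<ge> 5" using assms(1) by simp
  then have "0 < pi / real n" by simp
  then show "0 < x" using assms(2) by linarith
  have "pi / (real n - 1) \<le> pi / 4" using n by (intro divide_left_mono) auto
  then show "x \<le> pi / 4" using assms(3) by linarith
qed

lemma multiple_angle_bounds:
  assumes n: "n \<ge> 5" and x: "pi / real n \<le> x" "x \<le> pi / (real n - 1)"
  shows "0 \<le> sin ((real n - 1) * x)" "0 \<le> sin ((real n - 2) * x)"
    and "cos ((real n - 1) * x) \<le> cos ((real n - 2) * x)" "cos ((real n - 2) * x) \<le> 0"
    and "cos ((real n - 1) * x) \<le> - 7 / 10"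
proof -
  have nr: "real n \<ge> 5" using n by simp
  have "0 < x" using root_interval_bounds[OF n x] by simp
  have "(real n - 1) * (pi / real n) \<le> (real n - 1) * x" using x nr by (intro mult_left_mono) auto
  then have a1: "pi - pi / real n \<le> (real n - 1) * x" using nr by (simp add: field_simps)
  have "(real n - 1) * x \<le> (real n - 1) * (pi / (real n - 1))" using x nr by (intro mult_left_mono) auto
  then have a2: "(real n - 1) * x \<le> pi" using nr by simp
  have "(real n - 2) * (pi / real n) \<le> (real n - 2) * x" using x nr by (intro mult_left_mono) auto
  moreover have "pi / 2 \<le> (real n - 2) * (pi / real n)" using nr by (simp add: field_simps)
  ultimately have b1: "pi / 2 \<le> (real n - 2) * x" by linarith
  have b2: "(real n - 2) * x < pi" using a2 \<open>0 < x\<close> by (simp add: algebra_simps)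
  show "0 \<le> sin ((real n - 1) * x)" using a2 \<open>0 < x\<close> nr by (intro sin_ge_zero) auto
  show "0 \<le> sin ((real n - 2) * x)" using b1 b2 by (intro sin_ge_zero) auto
  show "cos ((real n - 1) * x) \<le> cos ((real n - 2) * x)"
    using b1 a2 \<open>0 < x\<close> nr by (intro cos_monotone_0_pi_le) (auto simp: algebra_simps)
  show "cos ((real n - 2) * x) \<le> 0"
    using b1 b2 cos_monotone_0_pi_le[of "pi / 2" "(real n - 2) * x"] by simp
  have "pi / real n \<le> pi / 4" using nr by (intro divide_left_mono) auto
  then have "cos (pi / 4) \<le> cos (pi - (real n - 1) * x)"
    using a1 a2 by (intro cos_monotone_0_pi_le) auto
  moreover have "7 / 10 < sqrt 2 / 2"
    using real_less_rsqrt[of "7 / 5" 2] by (simp add: power2_eq_square)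
  ultimately show "cos ((real n - 1) * x) \<le> - 7 / 10" by (simp add: cos_45)
qed

lemma phi_deriv_neg:
  assumes n: "n \<ge> 5" and x: "pi / real n \<le> x" "x \<le> pi / (real n - 1)"
  shows "phi_deriv n x < 0"
proof -
  define R where "R = rho x"
  define S1 S2 C1 C2
    where "S1 = sin ((real n - 1) * x)" and "S2 = sin ((real n - 2) * x)"
      and "C1 = cos ((real n - 1) * x)" and "C2 = cos ((real n - 2) * x)"
  note angles = multiple_angle_bounds[OF n x, folded S1_def S2_def C1_def C2_def]
  have nr: "real n \<ge> 5" using n by simp
  have x0: "0 < x" and x4: "x \<le> pi / 4" using root_interval_bounds[OF n x] by simp_all
  have cos_pos: "0 < cos x" using x0 x4 by (intro cos_gt_zero) auto
  have sin_pos: "0 < sin x" using x0 x4 by (intro sin_gt_zero) auto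
  have R0: "0 < R" and R1: "R < 1" and R2: "R ^ 2 \<le> 1 / 2"
    using rho_pos[OF cos_pos] rho_less_one[of x] rho_squared_le[of x] x0 x4 by (simp_all add: R_def)
  have R4: "R ^ 4 \<le> 1 / 4"
    using power_mono[OF R2, of 2] R0 by (simp add: power_divide flip: power_mult)
  have R6: "R ^ 6 \<le> 1 / 8"
    using power_mono[OF R2, of 3] R0 by (simp add: power_divide flip: power_mult)
  have R3: "R ^ 3 \<le> 9 / 25"
  proof (rule ccontr)
    assume "\<not> R ^ 3 \<le> 9 / 25"
    then have "(9 / 25) ^ 2 < (R ^ 3) ^ 2" by (intro power_strict_mono) auto
    with R6 show False by (simp add: power_divide flip: power_mult)
  qed
  have sin_sq: "sin x ^ 2 \<le> 1 / 2"
  proof -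
    have "sin x \<le> sin (pi / 4)" using x0 x4 by (intro sin_monotone_2pi_le) auto
    then have "sin x ^ 2 \<le> (sqrt 2 / 2) ^ 2" using sin_pos by (intro power_mono) (auto simp: sin_45)
    then show ?thesis by (simp add: power_divide)
  qed
  have "(real n - 1) * C1 \<le> (real n - 2) * C1" using angles(5) by (simp add: algebra_simps)
  also have "\<dots> \<le> (real n - 2) * C2" using angles(3) nr by (intro mult_left_mono) auto
  finally have C_mono: "(real n - 1) * C1 \<le> (real n - 2) * C2" .
  have "(1 - R ^ 4 - R ^ 3) * C1 \<le> (1 - R ^ 4 - R ^ 3) * (- 7 / 10)"
    using angles(5) R3 R4 by (intro mult_left_mono) auto
  also have "\<dots> \<le> 39 / 100 * (- 7 / 10)" using R3 R4 by simp
  finally have "(real n - 1) * ((1 - R ^ 4 - R ^ 3) * C1) \<le> (real n - 1) * (39 / 100 * (- 7 / 10))"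
    using nr by (intro mult_left_mono) auto
  moreover have "R ^ 3 * ((real n - 1) * C1) \<le> R ^ 3 * ((real n - 2) * C2)"
    using C_mono R0 by (intro mult_left_mono) auto
  ultimately have main: "(real n - 1) * (1 - R ^ 4) * C1 - (real n - 2) * R ^ 3 * C2 \<le> - 273 / 1000 * (real n - 1)"
    by (simp add: algebra_simps)
  have "R ^ (n + 1) \<le> R ^ 6" using n R0 R1 by (intro power_decreasing) auto
  then have "2 * real n * R ^ (n + 1) * sin x ^ 2 \<le> 2 * real n * (1 / 8) * (1 / 2)"
    using R6 sin_sq R0 by (intro mult_mono) auto
  then have "2 * real n * R ^ (n + 1) * sin x ^ 2 \<le> real n / 8" by simp
  moreover have "R ^ n \<le> R ^ 4" using n R0 R1 by (intro power_decreasing) auto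
  then have "R ^ n * cos x \<le> 1 / 4 * 1"
    using R4 R0 cos_pos by (intro mult_mono) auto
  moreover have "- 8 * R ^ 5 * sin x * S1 \<le> 0" "0 \<le> 6 * R ^ 4 * sin x * S2"
    using R0 sin_pos angles(1,2) by (simp_all add: mult_nonneg_nonneg)
  ultimately show ?thesis
    using main nr unfolding phi_deriv_def R_def [symmetric] S1_def [symmetric] S2_def [symmetric]
      C1_def [symmetric] C2_def [symmetric] by argo
qed

lemma phi_left_endpoint_pos:
  assumes "n \<ge> 5"
  shows "phi n (pi / real n) > 0"
proof -
  define a where "a = pi / real n"
  define R where "R = rho a"
  have nr: "real n \<ge> 5" using assms by simp
  have a0: "0 < a" and a4: "a \<le> pi / 4"
    using root_interval_bounds[OF assms, of a] nr by (auto simp: a_def field_simps)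
  have "0 < cos a" "0 < sin a" using a0 a4 by (auto intro!: cos_gt_zero sin_gt_zero)
  have R0: "0 < R" and R2: "R ^ 2 \<le> 1 / 2" and Rcos: "R * cos a = 1 / 2"
    using rho_pos rho_mult_cos rho_squared_le[of a] \<open>0 < cos a\<close> a0 a4 by (auto simp: R_def)
  have "(real n - 1) * a = pi - a" and "(real n - 2) * a = pi - 2 * a"
    using nr by (simp_all add: a_def field_simps)
  then have "sin ((real n - 1) * a) = sin a" and "sin ((real n - 2) * a) = 2 * sin a * cos a"
    by (simp_all add: sin_double)
  then have "phi n a = sin a * (1 - R ^ 4 - R ^ 2 * (2 * R * cos a) + R ^ n)"
    by (simp add: phi_def R_def algebra_simps power2_eq_square power3_eq_cube)
  also have "\<dots> = sin a * (1 - R ^ 4 - R ^ 2 + R ^ n)" using Rcos by simp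
  also have "\<dots> > 0"
  proof -
    have "R ^ 4 \<le> 1 / 4" using power_mono[OF R2, of 2] R0 by (simp add: power_divide flip: power_mult)
    then show ?thesis using R0 R2 \<open>0 < sin a\<close> by (simp add: add_pos_nonneg)
  qed
  finally show ?thesis by (simp add: a_def)
qed

lemma phi_right_endpoint_neg:
  assumes "n \<ge> 5"
  shows "phi n (pi / (real n - 1)) < 0"
proof -
  define b where "b = pi / (real n - 1)"
  have nr: "real n \<ge> 5" using assms by simp
  have b0: "0 < b" and b4: "b \<le> pi / 4"
    using root_interval_bounds[OF assms, of b] nr by (auto simp: b_def field_simps)
  have "0 < cos b" "0 < sin b" using b0 b4 by (auto intro!: cos_gt_zero sin_gt_zero)
  have R0: "0 < rho b" and R1: "rho b < 1"
    using rho_pos[OF \<open>0 < cos b\<close>] rho_less_one[of b] b0 b4 by auto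
  have "(real n - 1) * b = pi" and "(real n - 2) * b = pi - b"
    using nr by (simp_all add: b_def field_simps)
  then have "phi n b = sin b * (rho b ^ n - rho b ^ 3)"
    by (simp add: phi_def algebra_simps)
  also have "\<dots> < 0"
    using power_strict_decreasing[of 3 n "rho b"] assms R0 R1 \<open>0 < sin b\<close>
    by (simp add: mult_pos_neg)
  finally show ?thesis by (simp add: b_def)
qed

lemma phi_strict_decreasing:
  assumes n: "n \<ge> 5" and "pi / real n \<le> x" "x < y" "y \<le> pi / (real n - 1)"
  shows "phi n y < phi n x"
proof (rule DERIV_neg_imp_decreasing[OF \<open>x < y\<close>])
  fix t assume t: "x \<le> t" "t \<le> y"
  then have interval: "pi / real n \<le> t" "t \<le> pi / (real n - 1)" using assms by linarith+
  then have "0 < cos t"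
    using root_interval_bounds[OF n interval] by (auto intro!: cos_gt_zero)
  then show "\<exists>D. (phi n has_real_derivative D) (at t) \<and> D < 0"
    using phi_has_real_derivative phi_deriv_neg[OF n interval] by force
qed

lemma eta_root:
  assumes n: "n \<ge> 5"
  shows "pi / real n < eta n" "eta n < pi / (real n - 1)" "Phi n (eta n) = 0"
proof -
  define a b where "a = pi / real n" and "b = pi / (real n - 1)"
  have "a < b" using n by (auto simp: a_def b_def intro!: divide_strict_left_mono)
  have cos_pos: "0 < cos x" if "a \<le> x" "x \<le> b" for x
    using root_interval_bounds[OF n, of x] that by (auto simp: a_def b_def intro!: cos_gt_zero)
  have "continuous_on {a..b} (phi n)"
    using phi_has_real_derivative cos_pos
    by (intro continuous_at_imp_continuous_on) (force intro: DERIV_isCont)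
  then obtain x where x: "a \<le> x" "x \<le> b" "phi n x = 0"
    using IVT2'[of "phi n" b 0 a] phi_left_endpoint_pos[OF n] phi_right_endpoint_neg[OF n] \<open>a < b\<close>
    by (force simp: a_def b_def)
  moreover have "x \<noteq> a" "x \<noteq> b"
    using x phi_left_endpoint_pos[OF n] phi_right_endpoint_neg[OF n] by (auto simp: a_def b_def)
  ultimately have root: "x \<in> {a<..<b} \<and> Phi n x = 0"
    using Phi_eq_phi[OF cos_pos] by auto
  have unique: "y = x" if "y \<in> {a<..<b} \<and> Phi n y = 0" for y
  proof -
    have "phi n y = 0" using that Phi_eq_phi cos_pos by force
    with x that show ?thesis
      using phi_strict_decreasing[OF n, of x y] phi_strict_decreasing[OF n, of y x]
      by (force simp: a_def b_def)
  qed
  have "eta n = x"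
    unfolding eta_def a_def[symmetric] b_def[symmetric] using root unique by (rule the_equality)
  then show "pi / real n < eta n" "eta n < pi / (real n - 1)" "Phi n (eta n) = 0"
    using root by (simp_all add: a_def b_def)
qed

lemma closed_segment_real_crossing:
  fixes p q :: complex
  assumes "Im p < 0" "0 \<le> Im q"
  shows "of_real ((Re p * Im q - Im p * Re q) / (Im q - Im p)) \<in> closed_segment p q"
proof -
  define d where "d = Im q - Im p"
  define u where "u = - Im p / d"
  have d: "d > 0" using assms by (simp add: d_def)
  have u: "0 \<le> u" "u \<le> 1" "1 - u = Im q / d"
    using assms d by (auto simp: u_def d_def field_simps)
  have "of_real ((Re p * Im q - Im p * Re q) / d) = (1 - u) *\<^sub>R p + u *\<^sub>R q"
    unfolding u(3) using d by (simp add: complex_eq_iff u_def field_simps)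
  then show ?thesis using u(1,2) unfolding closed_segment_def d_def by blast
qed

lemma exists_crossing_index:
  assumes "0 < \<eta>" "\<eta> < pi" "pi < real (k + 1) * \<eta>"
  obtains m :: nat where "1 \<le> m" "m \<le> k" "real m * \<eta> < pi" "pi \<le> (real m + 1) * \<eta>"
proof -
  define m where "m = nat \<lceil>pi / \<eta>\<rceil> - 1"
  have "1 < pi / \<eta>" "pi / \<eta> < real (k + 1)"
    using assms by (simp_all add: field_simps)
  then have "real m < pi / \<eta>" "pi / \<eta> \<le> real m + 1" "1 \<le> m" "m \<le> k"
    unfolding m_def by linarith+
  with assms(1) show ?thesis
    by (intro that) (simp_all add: field_simps)
qed

lemma crossing_index_trig_bounds:
  assumes "0 < \<eta>" "\<eta> < pi / 3" "1 \<le> m" "real m * \<eta> < pi" "pi \<le> (real m + 1) * \<eta>"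
  shows "0 < sin (real m * \<eta>)" "sin ((real m + 1) * \<eta>) \<le> 0"
    and "sin (real m * \<eta>) \<le> sin \<eta>" "cos \<eta> \<le> - cos (real m * \<eta>)"
proof -
  have near_pi: "pi - real m * \<eta> \<le> \<eta>" using assms(5) by (simp add: algebra_simps)
  show "0 < sin (real m * \<eta>)" using assms by (intro sin_gt_zero) auto
  show "sin ((real m + 1) * \<eta>) \<le> 0" using assms by (intro sin_le_zero) (auto simp: algebra_simps)
  have "sin (pi - real m * \<eta>) \<le> sin \<eta>"
    using near_pi assms by (intro sin_monotone_2pi_le) auto
  then show "sin (real m * \<eta>) \<le> sin \<eta>" by simp
  have "cos \<eta> \<le> cos (pi - real m * \<eta>)"
    using near_pi assms by (intro cos_monotone_0_pi_le) auto
  then show "cos \<eta> \<le> - cos (real m * \<eta>)" by simp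
qed

lemma negative_real_between_zz:
  assumes \<eta>: "0 < \<eta>" "\<eta> < pi / 3" and m: "1 \<le> m" "real m * \<eta> < pi" "pi \<le> (real m + 1) * \<eta>"
  shows "\<exists>v < 0. of_real v \<in> closed_segment (zz \<eta> (m - 1)) (zz \<eta> m)"
proof -
  define p q where "p = zz \<eta> (m - 1)" and "q = zz \<eta> m"
  define r c where "r = rho \<eta>" and "c = cc \<eta>"
  note trig = crossing_index_trig_bounds[OF \<eta> m]
  have "0 < cos \<eta>" using \<eta> by (intro cos_gt_zero) auto
  have r: "0 < r" "r < 1" using rho_pos[OF \<open>0 < cos \<eta>\<close>] rho_less_one[of \<eta>] \<eta> by (auto simp: r_def)
  have "0 < c" using cc_pos[of \<eta>] \<eta> by (simp add: c_def)
  have "m - 1 + 1 = m" using m by simp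
  then have p: "Re p = c * r ^ m * cos (real m * \<eta>)" "Im p = - c * r ^ m * sin (real m * \<eta>)"
    using Re_zz[OF \<open>0 < cos \<eta>\<close>, of "m - 1"] Im_zz[OF \<open>0 < cos \<eta>\<close>, of "m - 1"]
    by (simp_all only: p_def r_def c_def)
  have q: "Re q = c * r ^ (m + 1) * cos ((real m + 1) * \<eta>)"
    "Im q = - c * r ^ (m + 1) * sin ((real m + 1) * \<eta>)"
    using Re_zz Im_zz \<open>0 < cos \<eta>\<close> by (simp_all add: q_def r_def c_def add.commute)
  have "Im p < 0" "0 \<le> Im q"
    using \<open>0 < c\<close> r trig(1,2) by (simp_all add: p q mult_nonneg_nonpos)
  have "Re p * Im q - Im p * Re q = c * c * r ^ m * r ^ (m + 1) * sin (real m * \<eta> - (real m + 1) * \<eta>)"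
    unfolding p q sin_diff by (simp add: algebra_simps)
  also have "\<dots> = - (c * c * r ^ m * r ^ (m + 1) * sin \<eta>)"
    by (simp add: algebra_simps)
  finally have "Re p * Im q - Im p * Re q = - (c * c * r ^ m * r ^ (m + 1) * sin \<eta>)" .
  moreover have "0 < sin \<eta>" using \<eta> by (intro sin_gt_zero) auto
  ultimately have "(Re p * Im q - Im p * Re q) / (Im q - Im p) < 0"
    using \<open>Im p < 0\<close> \<open>0 \<le> Im q\<close> \<open>0 < c\<close> r by (intro divide_neg_pos) auto
  with closed_segment_real_crossing[OF \<open>Im p < 0\<close> \<open>0 \<le> Im q\<close>] show ?thesis
    unfolding p_def q_def by blast
qed

lemma real_beyond_one_between_b0_ww:
  assumes \<eta>: "0 < \<eta>" "\<eta> < pi / 3" and m: "1 \<le> m" "real m * \<eta> < pi" "pi \<le> (real m + 1) * \<eta>"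
  shows "\<exists>X > 1. of_real X \<in> closed_segment (b0 \<eta>) (ww \<eta> m)"
proof -
  define p q where "p = b0 \<eta>" and "q = ww \<eta> m"
  define r c where "r = rho \<eta>" and "c = cc \<eta>"
  define s C where "s = sin (real m * \<eta>)" and "C = cos (real m * \<eta>)"
  note trig = crossing_index_trig_bounds[OF \<eta> m, folded s_def C_def]
  have "0 < cos \<eta>" using \<eta> by (intro cos_gt_zero) auto
  have r: "0 < r" "r < 1" using rho_pos[OF \<open>0 < cos \<eta>\<close>] rho_less_one[of \<eta>] \<eta> by (auto simp: r_def)
  have "0 < c" using cc_pos[of \<eta>] \<eta> by (simp add: c_def)
  have "0 < sin \<eta>" using \<eta> by (intro sin_gt_zero) auto
  have p: "Re p = 1 / 2 + c * r ^ 4" "Im p = - r * sin \<eta>"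
    using Re_b0 Im_b0 \<open>0 < cos \<eta>\<close> by (simp_all add: p_def r_def c_def)
  have q: "Re q = 1 - c * r ^ (m + 2) * C" "Im q = c * r ^ (m + 2) * s"
    using Re_ww Im_ww \<open>0 < cos \<eta>\<close> by (simp_all add: q_def r_def c_def s_def C_def)
  have "Im p < 0" "0 \<le> Im q"
    using \<open>0 < c\<close> r trig(1) \<open>0 < sin \<eta>\<close> by (simp_all add: p q)
  have "r * sin \<eta> * cos \<eta> \<le> r * sin \<eta> * (- C)"
    using trig(4) r \<open>0 < sin \<eta>\<close> by (intro mult_left_mono) auto
  then have "r * sin \<eta> * cos \<eta> \<le> - (r * sin \<eta> * C)" by simp
  moreover have "r * sin \<eta> * cos \<eta> = sin \<eta> / 2"
    using rho_mult_cos[OF \<open>0 < cos \<eta>\<close>] by (simp add: r_def)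
  moreover have "0 < c * r ^ 4 * s" using \<open>0 < c\<close> r trig(1) by simp
  moreover have "(c * r ^ 4 - 1 / 2) * s = c * r ^ 4 * s - s / 2"
    by (simp add: algebra_simps)
  ultimately have "0 < (c * r ^ 4 - 1 / 2) * s - r * sin \<eta> * C"
    using trig(3) by linarith
  then have "0 < c * r ^ (m + 2) * ((c * r ^ 4 - 1 / 2) * s - r * sin \<eta> * C)"
    using \<open>0 < c\<close> r by simp
  also have "\<dots> = (Re p * Im q - Im p * Re q) - (Im q - Im p)"
    unfolding p q by (simp add: algebra_simps)
  finally have "1 < (Re p * Im q - Im p * Re q) / (Im q - Im p)"
    using \<open>Im p < 0\<close> \<open>0 \<le> Im q\<close> by (simp add: less_divide_eq)
  with closed_segment_real_crossing[OF \<open>Im p < 0\<close> \<open>0 \<le> Im q\<close>] show ?thesis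
    unfolding p_def q_def by blast
qed

theorem lemma6p3:
  fixes k :: nat and \<eta> :: real
  assumes "k \<ge> 4"
    and "0 < \<eta>" and "\<eta> < pi / 3"
    and "eta (k + 1) \<le> \<eta>" and "\<eta> < eta k"
  shows "0 \<in> convex hull (Vk \<eta> k) \<and> 1 \<in> convex hull (Vk \<eta> k)"
proof -
  have "pi / real (k + 1) < \<eta>"
    using eta_root(1)[of "k + 1"] assms(1,4) by simp
  then have "pi < real (k + 1) * \<eta>"
    by (simp add: field_simps)
  then obtain m where m: "1 \<le> m" "m \<le> k" "real m * \<eta> < pi" "pi \<le> (real m + 1) * \<eta>"
    using exists_crossing_index[of \<eta> k] assms(2,3) by auto
  obtain v where "v < 0" and v: "of_real v \<in> closed_segment (zz \<eta> (m - 1)) (zz \<eta> m)"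
    using negative_real_between_zz[OF assms(2,3) m(1,3,4)] by blast
  obtain X where "1 < X" and X: "of_real X \<in> closed_segment (b0 \<eta>) (ww \<eta> m)"
    using real_beyond_one_between_b0_ww[OF assms(2,3) m(1,3,4)] by blast
  define H where "H = convex hull (Vk \<eta> k)"
  have "zz \<eta> (m - 1) \<in> H" "zz \<eta> m \<in> H" "b0 \<eta> \<in> H" "ww \<eta> m \<in> H"
    using m(1,2) hull_subset[of "Vk \<eta> k" convex] by (auto simp: H_def Vk_def)
  then have "of_real v \<in> H" "of_real X \<in> H"
    using v X convex_contains_segment[of H] by (auto simp: H_def)
  then have "closed_segment (of_real v) (of_real X) \<subseteq> H"
    using convex_contains_segment[of H] by (simp add: H_def)
  moreover have "0 \<in> closed_segment v X" "1 \<in> closed_segment v X"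
    using \<open>v < 0\<close> \<open>1 < X\<close> by (simp_all add: closed_segment_eq_real_ivl)
  ultimately show ?thesis
    unfolding closed_segment_of_real H_def by force
qed

end
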